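(* Let $T:\mathbb{Z}^k\times X\to X$ be a continuous action on a compact metrizable space $X$ (not necessarily expansive), and let $d$ be a metric compatible with the topology with $\underline{\mathrm{mdim}}(X,T,d)<\infty$. Let $f:X\to X$ be a continuous map with $f\circ T^u=T^u\circ f$ for all $u\in\mathbb{Z}^k$ that is Lipschitz with respect to $d$, and let $L=\lim_{\varepsilon\to0}\sup_{0<d(x,y)<\varepsilon}d(f(x),f(y))/d(x,y)$. Then \[h_{\mathrm{top}}(T,f)\leq\log^+L\cdot\underline{\mathrm{mdim}}(X,T,d),\] where $\log^+L=\max(0,\log L)$ and $h_{\mathrm{top}}(T,f)$ is the topological entropy of the $\mathbb{Z}^k\times\mathbb{Z}_{\geq0}$-action generated by $T$ and $f$.
   Context: $\#(X,\rho,\varepsilon)$ is the minimal cardinality of an open cover of $X$ all of whose members have $\rho$-diameter $<\varepsilon$. For $\Omega\subset\mathbb{R}^k\times\mathbb{R}_{\geq0}$, $d_\Omega(x,y)=\sup_{(u,n)\in\Omega\cap(\mathbb{Z}^k\times\mathbb{Z}_{\geq0})}d(T^uf^nx,T^uf^ny)$, and for $\Omega\subset\mathbb{R}^k$, $d^T_\Omega(x,y)=\sup_{u\in\Omega\cap\mathbb{Z}^k}d(T^ux,T^uy)$. $S(X,T,d,\varepsilon)=\lim_{N\to\infty}\log\#(X,d^T_{[-N,N]^k},\varepsilon)/(2N+1)^k$ and $\underline{\mathrm{mdim}}(X,T,d)=\liminf_{\varepsilon\to0}S(X,T,d,\varepsilon)/\log(1/\varepsilon)$. $h_{\mathrm{top}}(T,f)=\lim_{\varepsilon\to0}S(X,(T,f),d,\varepsilon)$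 with $S(X,(T,f),d,\varepsilon)=\lim_{n,N\to\infty}\log\#(X,d_{[-N,N]^k\times[0,n]},\varepsilon)/((n+1)(2N+1)^k)$. *)

theory Defs
  imports "HOL-Analysis.Analysis"
begin

text \<open>Lattice points of the cube [-N,N]^k; Z^k is represented as 'k => int, k = CARD('k).\<close>
definition cube :: "nat \<Rightarrow> ('k::finite \<Rightarrow> int) set" where
  "cube N = {u. \<forall>i. \<bar>u i\<bar> \<le> int N}"

definition is_Zk_action :: "'a::metric_space set \<Rightarrow> (('k::finite \<Rightarrow> int) \<Rightarrow> 'a \<Rightarrow> 'a) \<Rightarrow> bool" where
  "is_Zk_action X T \<longleftrightarrow>
     (\<forall>u. T u ` X \<subseteq> X \<and> continuous_on X (T u)) \<and>
     (\<forall>x\<in>X. T (\<lambda>i. 0) x = x) \<and>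
     (\<forall>u v. \<forall>x\<in>X. T (\<lambda>i. u i + v i) x = T u (T v x))"

definition cov_num :: "'a::metric_space set \<Rightarrow> ('a \<Rightarrow> 'a \<Rightarrow> real) \<Rightarrow> real \<Rightarrow> nat" where
  "cov_num X \<rho> \<epsilon> = Inf {card \<U> | \<U>. finite \<U> \<and> X \<subseteq> \<Union>\<U> \<and>
      (\<forall>V\<in>\<U>. openin (top_of_set X) V \<and> (\<exists>\<delta><\<epsilon>. \<forall>x\<in>V. \<forall>y\<in>V. \<rho> x y \<le> \<delta>))}"

definition dyn_dist :: "(('k::finite \<Rightarrow> int) \<Rightarrow> 'a \<Rightarrow> 'a) \<Rightarrow> ('a \<Rightarrow> 'a) \<Rightarrow> nat \<Rightarrow> nat
    \<Rightarrow> 'a::metric_space \<Rightarrow> 'a \<Rightarrow> real" where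
  "dyn_dist T f N n x y =
     Max {dist (T u ((f ^^ m) x)) (T u ((f ^^ m) y)) | u m. u \<in> cube N \<and> m \<le> n}"

definition orbit_dist :: "(('k::finite \<Rightarrow> int) \<Rightarrow> 'a \<Rightarrow> 'a) \<Rightarrow> nat \<Rightarrow> 'a::metric_space \<Rightarrow> 'a \<Rightarrow> real" where
  "orbit_dist T N x y = Max {dist (T u x) (T u y) | u. u \<in> cube N}"

definition S_act :: "'a::metric_space set \<Rightarrow> (('k::finite \<Rightarrow> int) \<Rightarrow> 'a \<Rightarrow> 'a) \<Rightarrow> real \<Rightarrow> real" where
  "S_act X T \<epsilon> = lim (\<lambda>N. ln (real (cov_num X (orbit_dist T N) \<epsilon>)) / (2 * real N + 1) ^ CARD('k))"

definition lower_mdim :: "'a::metric_space set \<Rightarrow> (('k::finite \<Rightarrow> int) \<Rightarrow> 'a \<Rightarrow> 'a) \<Rightarrow> ereal" where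
  "lower_mdim X T = Liminf (at_right 0) (\<lambda>\<epsilon>. ereal (S_act X T \<epsilon> / ln (1 / \<epsilon>)))"

definition S_joint :: "'a::metric_space set \<Rightarrow> (('k::finite \<Rightarrow> int) \<Rightarrow> 'a \<Rightarrow> 'a) \<Rightarrow> ('a \<Rightarrow> 'a) \<Rightarrow> real \<Rightarrow> real" where
  "S_joint X T f \<epsilon> = Lim (sequentially \<times>\<^sub>F sequentially)
     (\<lambda>(n, N). ln (real (cov_num X (dyn_dist T f N n) \<epsilon>)) / ((real n + 1) * (2 * real N + 1) ^ CARD('k)))"

definition htop :: "'a::metric_space set \<Rightarrow> (('k::finite \<Rightarrow> int) \<Rightarrow> 'a \<Rightarrow> 'a) \<Rightarrow> ('a \<Rightarrow> 'a) \<Rightarrow> ereal" where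
  "htop X T f = Lim (at_right 0) (\<lambda>\<epsilon>. ereal (S_joint X T f \<epsilon>))"

text \<open>L = lim_{eps->0} sup_{0<d(x,y)<eps} d(fx,fy)/d(x,y); sup of the empty set is -infinity\<close>
definition local_lip :: "'a::metric_space set \<Rightarrow> ('a \<Rightarrow> 'a) \<Rightarrow> ereal" where
  "local_lip X f = Lim (at_right 0) (\<lambda>\<epsilon>.
     SUP p \<in> {(x, y). x \<in> X \<and> y \<in> X \<and> 0 < dist x y \<and> dist x y < \<epsilon>}.
       ereal (dist (f (fst p)) (f (snd p)) / dist (fst p) (snd p)))"

definition log_plus :: "ereal \<Rightarrow> ereal" where
  "log_plus L = (if L \<le> 1 then 0 else if L = \<infinity> then \<infinity> else ereal (ln (real_of_ereal L)))"

end

theory Submission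
  imports Defs "HOL-Real_Asymp.Real_Asymp"
begin

text \<open>Covering numbers of the joint action over windows [-N,N]^k \<times> [0,n] are submultiplicative
  under unions and do not grow under translation of the window, so tiling a large box by
  translates of a small one shows that the normalized logarithms converge to their infimum;
  in particular the limits in the definitions exist and the rates are monotone in the scale.

  If f is L-Lipschitz at small scales and commutes with T, points that stay \<delta>-close along the
  T-orbit window stay \<delta>L^j-close after j iterates of f. Hence the window [-N,N]^k \<times> [0,n]
  at scale \<epsilon> costs no more than the spatial window alone at scale \<epsilon>/L^n, i.e.
  S(X,(T,f),\<epsilon>) \<le> S(X,T,\<epsilon>/L^n)/(n+1). Choosing \<delta> with S(X,T,\<delta>) \<le> m ln(1/\<delta>) and
  n \<approx> ln(\<epsilon>/\<delta>)/ln L yields S(X,(T,f),\<epsilon>) \<le> m ln L + m ln(1/\<epsilon>)/n with n arbitrarily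
  large.\<close>

section \<open>Covering numbers\<close>

definition small_covers :: "'a::metric_space set \<Rightarrow> ('a \<Rightarrow> 'a \<Rightarrow> real) \<Rightarrow> real \<Rightarrow> 'a set set set" where
  "small_covers X \<rho> \<epsilon> = {\<U>. finite \<U> \<and> X \<subseteq> \<Union>\<U> \<and>
      (\<forall>V\<in>\<U>. openin (top_of_set X) V \<and> (\<exists>\<delta><\<epsilon>. \<forall>x\<in>V. \<forall>y\<in>V. \<rho> x y \<le> \<delta>))}"

lemma cov_num_eq_Inf_card: "cov_num X \<rho> \<epsilon> = Inf (card ` small_covers X \<rho> \<epsilon>)"
  unfolding cov_num_def small_covers_def by (simp add: setcompr_eq_image)

lemma cov_num_le_card: "\<U> \<in> small_covers X \<rho> \<epsilon> \<Longrightarrow> cov_num X \<rho> \<epsilon> \<le> card \<U>"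
  unfolding cov_num_eq_Inf_card by (simp add: cInf_lower)

lemma small_cover_of_card_cov_num:
  assumes "small_covers X \<rho> \<epsilon> \<noteq> {}"
  obtains \<U> where "\<U> \<in> small_covers X \<rho> \<epsilon>" "card \<U> = cov_num X \<rho> \<epsilon>"
proof -
  have "Inf (card ` small_covers X \<rho> \<epsilon>) \<in> card ` small_covers X \<rho> \<epsilon>"
    using assms by (intro Inf_nat_def1) auto
  then show thesis using that unfolding cov_num_eq_Inf_card by (metis imageE)
qed

lemma cov_num_empty: "cov_num {} \<rho> \<epsilon> = 0"
  using cov_num_le_card[of "{}" "{}" \<rho> \<epsilon>] by (simp add: small_covers_def)

lemma cov_num_ge_1:
  assumes "X \<noteq> {}" "small_covers X \<rho> \<epsilon> \<noteq> {}"
  shows "1 \<le> cov_num X \<rho> \<epsilon>"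
proof -
  obtain \<U> where "\<U> \<in> small_covers X \<rho> \<epsilon>" "card \<U> = cov_num X \<rho> \<epsilon>"
    using small_cover_of_card_cov_num[OF assms(2)] .
  moreover from this have "finite \<U>" "\<U> \<noteq> {}"
    using assms(1) unfolding small_covers_def by auto
  ultimately show ?thesis by (metis card_0_eq less_one not_less)
qed

lemma small_covers_nonempty:
  fixes X :: "'a::metric_space set"
  assumes "compact X" "\<epsilon> > 0"
    and cont: "\<And>x. x \<in> X \<Longrightarrow> continuous_on X (\<rho> x)"
    and refl: "\<And>x. x \<in> X \<Longrightarrow> \<rho> x x = 0"
    and sym: "\<And>x y. x \<in> X \<Longrightarrow> y \<in> X \<Longrightarrow> \<rho> x y = \<rho> y x"
    and tri: "\<And>x y z. x \<in> X \<Longrightarrow> y \<in> X \<Longrightarrow> z \<in> X \<Longrightarrow> \<rho> x z \<le> \<rho> x y + \<rho> y z"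
  shows "small_covers X \<rho> \<epsilon> \<noteq> {}"
proof -
  define B where "B x = X \<inter> \<rho> x -` {..<\<epsilon>/3}" for x
  have B_open: "openin (top_of_set X) (B x)" if "x \<in> X" for x
    unfolding B_def by (rule continuous_openin_preimage_gen[OF cont[OF that]]) auto
  have "X \<subseteq> \<Union>(B ` X)" using refl assms(2) by (auto simp: B_def)
  then obtain \<D> where \<D>: "\<D> \<subseteq> B ` X" "finite \<D>" "X \<subseteq> \<Union>\<D>"
  proof -
    have "\<forall>C\<in>B ` X. openin (top_of_set X) C" using B_open by blast
    then show ?thesis using that \<open>X \<subseteq> \<Union>(B ` X)\<close> assms(1) unfolding compact_eq_openin_cover by meson
  qed
  have "\<D> \<in> small_covers X \<rho> \<epsilon>"
    unfolding small_covers_def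
  proof (intro CollectI conjI ballI \<D>)
    fix V assume "V \<in> \<D>"
    then obtain x where x: "x \<in> X" "V = B x" using \<D>(1) by auto
    show "openin (top_of_set X) V" using B_open x by simp
    show "\<exists>\<delta><\<epsilon>. \<forall>y\<in>V. \<forall>z\<in>V. \<rho> y z \<le> \<delta>"
    proof (intro exI[of _ "2*\<epsilon>/3"] conjI ballI)
      fix y z assume "y \<in> V" "z \<in> V"
      then have "y \<in> X" "z \<in> X" "\<rho> x y < \<epsilon>/3" "\<rho> x z < \<epsilon>/3" using x by (auto simp: B_def)
      then show "\<rho> y z \<le> 2*\<epsilon>/3" using tri[of y x z] sym[of x y] x by linarith
    qed (use assms(2) in auto)
  qed
  then show ?thesis by blast
qed

lemma cov_num_mono:
  assumes "small_covers X \<rho>2 \<epsilon>2 \<noteq> {}"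
    and finer: "\<And>\<delta>. \<delta> < \<epsilon>2 \<Longrightarrow> \<exists>\<delta>'<\<epsilon>1. \<forall>x\<in>X. \<forall>y\<in>X. \<rho>2 x y \<le> \<delta> \<longrightarrow> \<rho>1 x y \<le> \<delta>'"
  shows "cov_num X \<rho>1 \<epsilon>1 \<le> cov_num X \<rho>2 \<epsilon>2"
proof -
  obtain \<U> where \<U>: "\<U> \<in> small_covers X \<rho>2 \<epsilon>2" "card \<U> = cov_num X \<rho>2 \<epsilon>2"
    using small_cover_of_card_cov_num[OF assms(1)] .
  have "\<U> \<in> small_covers X \<rho>1 \<epsilon>1"
    unfolding small_covers_def
  proof (intro CollectI conjI ballI)
    show "finite \<U>" "X \<subseteq> \<Union>\<U>" using \<U>(1) by (auto simp: small_covers_def)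
    fix V assume V: "V \<in> \<U>"
    then show "openin (top_of_set X) V" using \<U>(1) by (auto simp: small_covers_def)
    then have "V \<subseteq> X" by (rule openin_imp_subset)
    moreover obtain \<delta> where "\<delta> < \<epsilon>2" and "\<forall>x\<in>V. \<forall>y\<in>V. \<rho>2 x y \<le> \<delta>"
      using V \<U>(1) by (auto simp: small_covers_def)
    moreover obtain \<delta>' where "\<delta>' < \<epsilon>1" "\<forall>x\<in>X. \<forall>y\<in>X. \<rho>2 x y \<le> \<delta> \<longrightarrow> \<rho>1 x y \<le> \<delta>'"
      using finer[OF \<open>\<delta> < \<epsilon>2\<close>] by blast
    ultimately show "\<exists>\<delta><\<epsilon>1. \<forall>x\<in>V. \<forall>y\<in>V. \<rho>1 x y \<le> \<delta>" by blast
  qed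
  then show ?thesis using cov_num_le_card \<U>(2) by metis
qed

lemma cov_num_max_le_mult:
  assumes ne1: "small_covers X \<rho>1 \<epsilon> \<noteq> {}" and ne2: "small_covers X \<rho>2 \<epsilon> \<noteq> {}"
    and dominated: "\<And>x y. x \<in> X \<Longrightarrow> y \<in> X \<Longrightarrow> \<rho> x y \<le> max (\<rho>1 x y) (\<rho>2 x y)"
  shows "cov_num X \<rho> \<epsilon> \<le> cov_num X \<rho>1 \<epsilon> * cov_num X \<rho>2 \<epsilon>"
proof -
  obtain \<U> where U: "\<U> \<in> small_covers X \<rho>1 \<epsilon>" "card \<U> = cov_num X \<rho>1 \<epsilon>"
    using small_cover_of_card_cov_num[OF ne1] by blast
  obtain \<V> where V: "\<V> \<in> small_covers X \<rho>2 \<epsilon>" "card \<V> = cov_num X \<rho>2 \<epsilon>"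
    using small_cover_of_card_cov_num[OF ne2] by blast
  define meet where "meet = (\<lambda>p::'a set \<times> 'a set. fst p \<inter> snd p)"
  define \<W> where "\<W> = meet ` (\<U> \<times> \<V>)"
  have Uc: "finite \<U>" "X \<subseteq> \<Union>\<U>" "\<And>A. A \<in> \<U> \<Longrightarrow> openin (top_of_set X) A \<and> (\<exists>\<delta><\<epsilon>. \<forall>x\<in>A. \<forall>y\<in>A. \<rho>1 x y \<le> \<delta>)"
    using U(1) unfolding small_covers_def by blast+
  have Vc: "finite \<V>" "X \<subseteq> \<Union>\<V>" "\<And>A. A \<in> \<V> \<Longrightarrow> openin (top_of_set X) A \<and> (\<exists>\<delta><\<epsilon>. \<forall>x\<in>A. \<forall>y\<in>A. \<rho>2 x y \<le> \<delta>)"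
    using V(1) unfolding small_covers_def by blast+
  have "\<W> \<in> small_covers X \<rho> \<epsilon>"
    unfolding small_covers_def
  proof (intro CollectI conjI ballI)
    show "finite \<W>" unfolding \<W>_def using Uc(1) Vc(1) by blast
    show "X \<subseteq> \<Union>\<W>"
    proof
      fix x assume x: "x \<in> X"
      then obtain A where A: "A \<in> \<U>" "x \<in> A" using Uc(2) by blast
      obtain B where B: "B \<in> \<V>" "x \<in> B" using Vc(2) x by blast
      have "meet (A, B) \<in> \<W>" unfolding \<W>_def using A B by blast
      moreover have "x \<in> meet (A, B)" using A B by (simp add: meet_def)
      ultimately show "x \<in> \<Union>\<W>" by blast
    qed
    fix W assume "W \<in> \<W>"
    then obtain A B where AB: "A \<in> \<U>" "B \<in> \<V>" "W = A \<inter> B" unfolding \<W>_def meet_def by force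
    have oA: "openin (top_of_set X) A" and oB: "openin (top_of_set X) B" using AB(1,2) Uc(3) Vc(3) by blast+
    then show "openin (top_of_set X) W" using AB(3) by (simp add: openin_Int)
    obtain d1 where d1: "d1 < \<epsilon>" "\<forall>x\<in>A. \<forall>y\<in>A. \<rho>1 x y \<le> d1" using AB(1) Uc(3) by blast
    obtain d2 where d2: "d2 < \<epsilon>" "\<forall>x\<in>B. \<forall>y\<in>B. \<rho>2 x y \<le> d2" using AB(2) Vc(3) by blast
    have AX: "A \<subseteq> X" using oA by (rule openin_imp_subset)
    have "max d1 d2 < \<epsilon>" using d1(1) d2(1) by simp
    moreover have "\<forall>x\<in>W. \<forall>y\<in>W. \<rho> x y \<le> max d1 d2"
    proof (intro ballI)
      fix x y assume "x \<in> W" "y \<in> W"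
      then have "x \<in> A" "y \<in> A" "x \<in> B" "y \<in> B" using AB(3) by auto
      then have "\<rho>1 x y \<le> d1" "\<rho>2 x y \<le> d2" "x \<in> X" "y \<in> X" using d1(2) d2(2) AX by auto
      then show "\<rho> x y \<le> max d1 d2" using dominated[of x y] by linarith
    qed
    ultimately show "\<exists>\<delta><\<epsilon>. \<forall>x\<in>W. \<forall>y\<in>W. \<rho> x y \<le> \<delta>" by blast
  qed
  then have "cov_num X \<rho> \<epsilon> \<le> card \<W>" by (rule cov_num_le_card)
  also have "\<dots> \<le> card (\<U> \<times> \<V>)" unfolding \<W>_def using Uc(1) Vc(1) by (intro card_image_le) auto
  also have "\<dots> = cov_num X \<rho>1 \<epsilon> * cov_num X \<rho>2 \<epsilon>" using U(2) V(2) by (simp add: card_cartesian_product)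
  finally show ?thesis .
qed

lemma cov_num_pullback:
  assumes ne: "small_covers X \<rho>2 \<epsilon> \<noteq> {}" and cont: "continuous_on X \<Phi>" and maps: "\<Phi> ` X \<subseteq> X"
    and dominated: "\<And>x y. x \<in> X \<Longrightarrow> y \<in> X \<Longrightarrow> \<rho>1 x y \<le> \<rho>2 (\<Phi> x) (\<Phi> y)"
  shows "cov_num X \<rho>1 \<epsilon> \<le> cov_num X \<rho>2 \<epsilon>"
proof -
  obtain \<U> where U: "\<U> \<in> small_covers X \<rho>2 \<epsilon>" "card \<U> = cov_num X \<rho>2 \<epsilon>"
    using small_cover_of_card_cov_num[OF ne] by blast
  define \<W> where "\<W> = (\<lambda>A. X \<inter> \<Phi> -` A) ` \<U>"
  have fin: "finite \<U>" using U by (auto simp: small_covers_def)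
  have "\<W> \<in> small_covers X \<rho>1 \<epsilon>"
    unfolding small_covers_def
  proof (intro CollectI conjI ballI)
    show "finite \<W>" using fin by (simp add: \<W>_def)
    show "X \<subseteq> \<Union>\<W>"
    proof
      fix x assume x: "x \<in> X"
      then have "\<Phi> x \<in> X" using maps by auto
      then obtain A where "A \<in> \<U>" "\<Phi> x \<in> A" using U(1) unfolding small_covers_def by blast
      then show "x \<in> \<Union>\<W>" unfolding \<W>_def using x by blast
    qed
    fix W assume "W \<in> \<W>"
    then obtain A where A: "A \<in> \<U>" "W = X \<inter> \<Phi> -` A" by (auto simp: \<W>_def)
    have oA: "openin (top_of_set X) A" using A U(1) by (auto simp: small_covers_def)
    show "openin (top_of_set X) W" unfolding A(2)
      by (rule continuous_openin_preimage[OF cont _ oA]) (use maps in auto)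
    obtain d where d: "d < \<epsilon>" "\<forall>x\<in>A. \<forall>y\<in>A. \<rho>2 x y \<le> d" using A U(1) by (auto simp: small_covers_def)
    show "\<exists>\<delta><\<epsilon>. \<forall>x\<in>W. \<forall>y\<in>W. \<rho>1 x y \<le> \<delta>"
    proof (intro exI[of _ d] conjI ballI)
      fix x y assume "x \<in> W" "y \<in> W"
      then have "\<Phi> x \<in> A" "\<Phi> y \<in> A" "x \<in> X" "y \<in> X" using A by auto
      then have "\<rho>2 (\<Phi> x) (\<Phi> y) \<le> d" using d(2) by blast
      then show "\<rho>1 x y \<le> d" using dominated[of x y] \<open>x \<in> X\<close> \<open>y \<in> X\<close> by linarith
    qed (use d in auto)
  qed
  then have "cov_num X \<rho>1 \<epsilon> \<le> card \<W>" by (rule cov_num_le_card)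
  also have "\<dots> \<le> card \<U>" unfolding \<W>_def using fin by (intro card_image_le) auto
  finally show ?thesis using U by simp
qed

section \<open>Windows of the joint action\<close>

definition window_dist :: "(('k::finite \<Rightarrow> int) \<Rightarrow> 'a \<Rightarrow> 'a) \<Rightarrow> ('a \<Rightarrow> 'a) \<Rightarrow> (('k \<Rightarrow> int) \<times> nat) set
    \<Rightarrow> 'a::metric_space \<Rightarrow> 'a \<Rightarrow> real" where
  "window_dist T f F x y = Max ((\<lambda>(u, m). dist (T u ((f ^^ m) x)) (T u ((f ^^ m) y))) ` F)"

definition box :: "nat \<Rightarrow> nat \<Rightarrow> (('k::finite \<Rightarrow> int) \<times> nat) set" where
  "box N n = cube N \<times> {..n}"

definition shift_window :: "('k::finite \<Rightarrow> int) \<times> nat \<Rightarrow> (('k \<Rightarrow> int) \<times> nat) set \<Rightarrow> (('k \<Rightarrow> int) \<times> nat) set" where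
  "shift_window t F = (\<lambda>(u, m). (\<lambda>i. u i + fst t i, m + snd t)) ` F"

lemma finite_shift_window [simp]: "finite (shift_window t F) \<longleftrightarrow> finite F"
  unfolding shift_window_def by (rule finite_image_iff) (auto simp: inj_on_def fun_eq_iff)

lemma shift_window_empty_iff [simp]: "shift_window t F = {} \<longleftrightarrow> F = {}"
  by (simp add: shift_window_def)

lemma cube_eq_PiE: "cube N = (PiE UNIV (\<lambda>_. {-int N..int N}) :: ('k::finite \<Rightarrow> int) set)"
proof -
  have "\<bar>z\<bar> \<le> int N \<longleftrightarrow> z \<in> {-int N..int N}" for z :: int by auto
  then show ?thesis by (simp add: cube_def PiE_UNIV_domain Pi_def)
qed

lemma finite_cube: "finite (cube N)"
  unfolding cube_eq_PiE by (intro finite_PiE) auto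

lemma card_cube: "card (cube N :: ('k::finite \<Rightarrow> int) set) = (2*N+1) ^ CARD('k)"
proof -
  have "nat (2 * int N + 1) = 2*N+1" by simp
  then show ?thesis unfolding cube_eq_PiE by (simp add: card_PiE)
qed

lemma zero_in_cube: "(\<lambda>i. 0) \<in> cube N"
  by (simp add: cube_def)

lemma finite_box: "finite (box N n)"
  by (simp add: box_def finite_cube)

lemma box_nonempty: "box N n \<noteq> {}"
  using zero_in_cube by (auto simp: box_def)

lemma dyn_dist_eq_window_dist: "dyn_dist T f N n = window_dist T f (box N n)"
proof (intro ext)
  fix x y
  have "{dist (T u ((f ^^ m) x)) (T u ((f ^^ m) y)) | u m. u \<in> cube N \<and> m \<le> n}
     = (\<lambda>(u, m). dist (T u ((f ^^ m) x)) (T u ((f ^^ m) y))) ` box N n"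
    by (auto simp: box_def)
  then show "dyn_dist T f N n x y = window_dist T f (box N n) x y"
    by (simp add: dyn_dist_def window_dist_def)
qed

lemma orbit_dist_eq_window_dist: "orbit_dist T N = window_dist T f (box N 0)"
proof (intro ext)
  fix x y
  have "{dist (T u x) (T u y) | u. u \<in> cube N}
     = (\<lambda>(u, m). dist (T u ((f ^^ m) x)) (T u ((f ^^ m) y))) ` box N 0"
    by (force simp: box_def)
  then show "orbit_dist T N x y = window_dist T f (box N 0) x y"
    by (simp add: orbit_dist_def window_dist_def)
qed

lemma centered_div_mod_bounds:
  fixes z :: int and M N :: nat
  assumes z: "\<bar>z\<bar> \<le> int N"
  defines "s \<equiv> 2 * int M + 1"
  shows "\<bar>(z + int M) mod s - int M\<bar> \<le> int M"
    and "\<bar>(z + int M) div s\<bar> \<le> int (N div (2*M+1) + 1)"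
proof -
  have s: "s > 0" by (simp add: s_def)
  show "\<bar>(z + int M) mod s - int M\<bar> \<le> int M"
    using pos_mod_sign[OF s] pos_mod_bound[OF s] by (simp add: s_def abs_le_iff)
  define w where "w = (z + int M) div s"
  have "z + int M = s * w + (z + int M) mod s"
    unfolding w_def by simp
  then have w: "s * w \<le> z + int M" "z + int M < s * w + s"
    using pos_mod_sign[OF s, of "z + int M"] pos_mod_bound[OF s, of "z + int M"] by linarith+
  have "N < (2*M+1) * (N div (2*M+1) + 1)"
  proof -
    have "N = (2*M+1) * (N div (2*M+1)) + N mod (2*M+1)" by (rule mult_div_mod_eq[symmetric])
    moreover have "N mod (2*M+1) < 2*M+1" by simp
    ultimately show ?thesis unfolding distrib_left mult_1_right by linarith
  qed
  then have R: "int N < s * int (N div (2*M+1) + 1)"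
    unfolding s_def by (metis of_nat_less_iff of_nat_mult of_nat_Suc of_nat_mult of_nat_numeral Suc_eq_plus1 add.commute)
  have "s * (w - 1) < s * int (N div (2*M+1) + 1)" "s * (- w - 1) < s * int (N div (2*M+1) + 1)"
    using w z R by (simp_all add: algebra_simps s_def abs_le_iff)
  then have "w - 1 < int (N div (2*M+1) + 1)" "- w - 1 < int (N div (2*M+1) + 1)"
    using s by (simp_all add: mult_less_cancel_left)
  then show "\<bar>(z + int M) div s\<bar> \<le> int (N div (2*M+1) + 1)" unfolding w_def[symmetric] by linarith
qed

lemma box_subset_UN_shifted_boxes:
  fixes N n M m :: nat
  defines "R \<equiv> N div (2*M+1) + 1" and "J \<equiv> n div (m+1) + 1"
  shows "(box N n :: (('k::finite \<Rightarrow> int) \<times> nat) set) \<subseteq>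
     (\<Union>q\<in>cube R \<times> {..<J}. shift_window (\<lambda>i. (2 * int M + 1) * fst q i, (m+1) * snd q) (box M m))"
proof
  fix p :: "('k \<Rightarrow> int) \<times> nat" assume p: "p \<in> box N n"
  obtain u i where p_eq: "p = (u, i)" by (cases p)
  have u: "\<And>k. \<bar>u k\<bar> \<le> int N" and i: "i \<le> n" using p p_eq by (auto simp: box_def cube_def)
  define s where "s = 2 * int M + 1"
  define w where "w = (\<lambda>k. (u k + int M) div s)"
  define r where "r = (\<lambda>k. (u k + int M) mod s - int M)"
  have "(w, i div (m+1)) \<in> cube R \<times> {..<J}"
    using centered_div_mod_bounds(2)[OF u] i
    by (auto simp: cube_def w_def s_def R_def J_def less_Suc_eq_le div_le_mono)
  moreover have "(r, i mod (m+1)) \<in> box M m"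
    using centered_div_mod_bounds(1)[OF u] by (auto simp: box_def cube_def r_def s_def)
  moreover have "u = (\<lambda>k. r k + s * w k)"
    by (simp add: r_def w_def algebra_simps)
  moreover have "i = i mod (m+1) + (m+1) * (i div (m+1))"
    by (rule mod_mult_div_eq[symmetric])
  ultimately show "p \<in> (\<Union>q\<in>cube R \<times> {..<J}. shift_window (\<lambda>i. (2 * int M + 1) * fst q i, (m+1) * snd q) (box M m))"
    unfolding shift_window_def p_eq s_def by force
qed

section \<open>Covering numbers of windows\<close>

locale commuting_action =
  fixes X :: "'a::metric_space set" and T :: "('k::finite \<Rightarrow> int) \<Rightarrow> 'a \<Rightarrow> 'a" and f :: "'a \<Rightarrow> 'a"
  assumes compact: "compact X" and nonempty: "X \<noteq> {}" and action: "is_Zk_action X T"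
    and f_maps: "f ` X \<subseteq> X" and f_continuous: "continuous_on X f"
    and commute: "\<forall>u. \<forall>x\<in>X. f (T u x) = T u (f x)"
begin

abbreviation window_cov :: "(('k \<Rightarrow> int) \<times> nat) set \<Rightarrow> real \<Rightarrow> nat" where
  "window_cov F \<epsilon> \<equiv> cov_num X (window_dist T f F) \<epsilon>"

lemma act_in: "x \<in> X \<Longrightarrow> T u x \<in> X"
  using action unfolding is_Zk_action_def by blast

lemma act_continuous: "continuous_on X (T u)"
  using action unfolding is_Zk_action_def by blast

lemma act_add: "x \<in> X \<Longrightarrow> T (\<lambda>i. u i + v i) x = T u (T v x)"
  using action unfolding is_Zk_action_def by blast

lemma iterate_in: "x \<in> X \<Longrightarrow> (f ^^ m) x \<in> X"
  by (induction m) (use f_maps in auto)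

lemma iterate_continuous: "continuous_on X (f ^^ m)"
proof (induction m)
  case (Suc m)
  have "continuous_on X (f \<circ> (f ^^ m))"
    by (rule continuous_on_compose[OF Suc]) (rule continuous_on_subset[OF f_continuous], use iterate_in in auto)
  then show ?case by simp
qed simp

lemma iterate_act_commute: "x \<in> X \<Longrightarrow> (f ^^ m) (T v x) = T v ((f ^^ m) x)"
  by (induction m) (use commute iterate_in in auto)

lemma orbit_map_in: "x \<in> X \<Longrightarrow> T u ((f ^^ m) x) \<in> X"
  using act_in iterate_in by blast

lemma orbit_map_continuous: "continuous_on X (\<lambda>x. T u ((f ^^ m) x))"
proof -
  have "continuous_on X (T u \<circ> (f ^^ m))"
    by (rule continuous_on_compose[OF iterate_continuous])
      (rule continuous_on_subset[OF act_continuous], use iterate_in in auto)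
  then show ?thesis by (simp add: o_def)
qed

context
  fixes F :: "(('k \<Rightarrow> int) \<times> nat) set"
  assumes finite_F: "finite F" and F_nonempty: "F \<noteq> {}"
begin

lemma window_dist_ge:
  "(u, m) \<in> F \<Longrightarrow> dist (T u ((f ^^ m) x)) (T u ((f ^^ m) y)) \<le> window_dist T f F x y"
  unfolding window_dist_def using finite_F by (intro Max_ge) force+

lemma window_dist_le:
  "(\<And>u m. (u, m) \<in> F \<Longrightarrow> dist (T u ((f ^^ m) x)) (T u ((f ^^ m) y)) \<le> c) \<Longrightarrow> window_dist T f F x y \<le> c"
  unfolding window_dist_def using finite_F F_nonempty by (subst Max_le_iff) auto

lemma window_dist_nonneg: "0 \<le> window_dist T f F x y"
proof -
  obtain u m where "(u, m) \<in> F" using F_nonempty by auto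
  then show ?thesis using window_dist_ge[of u m x y] zero_le_dist order_trans by blast
qed

lemma window_dist_self: "window_dist T f F x x = 0"
  using window_dist_le[of x x 0] window_dist_nonneg[of x x] by simp

lemma window_dist_commute: "window_dist T f F x y = window_dist T f F y x"
  unfolding window_dist_def by (simp add: dist_commute case_prod_beta)

lemma window_dist_triangle: "window_dist T f F x z \<le> window_dist T f F x y + window_dist T f F y z"
proof (rule window_dist_le)
  fix u m assume "(u, m) \<in> F"
  then show "dist (T u ((f ^^ m) x)) (T u ((f ^^ m) z)) \<le> window_dist T f F x y + window_dist T f F y z"
    using dist_triangle[of "T u ((f ^^ m) x)" "T u ((f ^^ m) z)" "T u ((f ^^ m) y)"]
      window_dist_ge[of u m x y] window_dist_ge[of u m y z] by linarith
qed

lemma window_dist_continuous: "continuous_on X (window_dist T f F x)"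
proof -
  have "continuous_on X (\<lambda>y. Max ((\<lambda>(u, m). dist (T u ((f ^^ m) x)) (T u ((f ^^ m) y))) ` G))"
    if "finite G" "G \<noteq> {}" for G
    using that
  proof (induction G rule: finite_ne_induct)
    case (singleton p)
    then show ?case by (simp add: case_prod_beta continuous_on_dist orbit_map_continuous)
  next
    case (insert p G)
    then show ?case
      by (simp add: case_prod_beta continuous_on_max continuous_on_dist orbit_map_continuous)
  qed
  then show ?thesis unfolding window_dist_def[abs_def] using finite_F F_nonempty by blast
qed

lemma small_covers_window_nonempty: "\<epsilon> > 0 \<Longrightarrow> small_covers X (window_dist T f F) \<epsilon> \<noteq> {}"
  by (rule small_covers_nonempty[OF compact])
    (auto intro: window_dist_continuous window_dist_self window_dist_commute window_dist_triangle)

lemma window_cov_ge_1: "\<epsilon> > 0 \<Longrightarrow> 1 \<le> window_cov F \<epsilon>"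
  by (rule cov_num_ge_1[OF nonempty small_covers_window_nonempty])

lemma window_cov_antimono: "0 < \<epsilon>1 \<Longrightarrow> \<epsilon>1 \<le> \<epsilon>2 \<Longrightarrow> window_cov F \<epsilon>2 \<le> window_cov F \<epsilon>1"
  by (rule cov_num_mono[OF small_covers_window_nonempty]) (auto intro: less_le_trans)

end

lemma window_dist_mono:
  "finite G \<Longrightarrow> F \<subseteq> G \<Longrightarrow> F \<noteq> {} \<Longrightarrow> window_dist T f F x y \<le> window_dist T f G x y"
  unfolding window_dist_def by (intro Max_mono) auto

lemma window_cov_mono:
  assumes "finite G" "F \<subseteq> G" "F \<noteq> {}" "\<epsilon> > 0"
  shows "window_cov F \<epsilon> \<le> window_cov G \<epsilon>"
proof (rule cov_num_mono[OF small_covers_window_nonempty])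
  show "finite G" "G \<noteq> {}" "\<epsilon> > 0" using assms by auto
  fix \<delta> assume "\<delta> < \<epsilon>"
  then show "\<exists>\<delta>'<\<epsilon>. \<forall>x\<in>X. \<forall>y\<in>X. window_dist T f G x y \<le> \<delta> \<longrightarrow> window_dist T f F x y \<le> \<delta>'"
    using window_dist_mono[OF assms(1-3)] by (meson order_trans)
qed

lemma window_dist_Un:
  "finite F \<Longrightarrow> finite G \<Longrightarrow> F \<noteq> {} \<Longrightarrow> G \<noteq> {} \<Longrightarrow>
    window_dist T f (F \<union> G) x y = max (window_dist T f F x y) (window_dist T f G x y)"
  unfolding window_dist_def image_Un by (simp add: Max_Un)

lemma window_cov_Un_le:
  "finite F \<Longrightarrow> finite G \<Longrightarrow> F \<noteq> {} \<Longrightarrow> G \<noteq> {} \<Longrightarrow> \<epsilon> > 0 \<Longrightarrow>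
    window_cov (F \<union> G) \<epsilon> \<le> window_cov F \<epsilon> * window_cov G \<epsilon>"
  by (rule cov_num_max_le_mult[OF small_covers_window_nonempty small_covers_window_nonempty])
    (auto simp: window_dist_Un)

lemma window_cov_UN_le:
  assumes "finite I" "I \<noteq> {}" "\<epsilon> > 0"
    and "\<And>i. i \<in> I \<Longrightarrow> finite (F i) \<and> F i \<noteq> {} \<and> window_cov (F i) \<epsilon> \<le> c"
  shows "window_cov (\<Union>i\<in>I. F i) \<epsilon> \<le> c ^ card I"
  using assms(1,2,4)
proof (induction I rule: finite_ne_induct)
  case (insert i I)
  have "window_cov (\<Union>i\<in>insert i I. F i) \<epsilon> \<le> window_cov (F i) \<epsilon> * window_cov (\<Union>i\<in>I. F i) \<epsilon>"
    using insert.prems insert.hyps assms(3) by (simp add: window_cov_Un_le)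
  also have "\<dots> \<le> c * c ^ card I"
    using insert by (intro mult_le_mono) auto
  finally show ?case using insert by simp
qed simp

lemma window_dist_shift:
  "x \<in> X \<Longrightarrow> y \<in> X \<Longrightarrow>
    window_dist T f (shift_window (v, j) F) x y = window_dist T f F (T v ((f ^^ j) x)) (T v ((f ^^ j) y))"
  unfolding window_dist_def shift_window_def image_image
  by (simp add: case_prod_beta funpow_add act_add iterate_in iterate_act_commute)

lemma window_cov_shift_le:
  assumes "finite F" "F \<noteq> {}" "\<epsilon> > 0"
  shows "window_cov (shift_window t F) \<epsilon> \<le> window_cov F \<epsilon>"
proof -
  obtain v j where "t = (v, j)" by (cases t)
  then show ?thesis
    by (auto intro!: cov_num_pullback[OF small_covers_window_nonempty[OF assms] orbit_map_continuous]
        simp: orbit_map_in window_dist_shift)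
qed

lemma window_cov_box_le_power:
  assumes "\<epsilon> > 0"
  shows "window_cov (box N n) \<epsilon> \<le> window_cov (box M m) \<epsilon> ^ ((2*(N div (2*M+1) + 1)+1) ^ CARD('k) * (n div (m+1) + 1))"
proof -
  define R where "R = N div (2*M+1) + 1"
  define J where "J = n div (m+1) + 1"
  define I where "I = (cube R \<times> {..<J} :: (('k \<Rightarrow> int) \<times> nat) set)"
  define F where "F q = shift_window (\<lambda>i. (2 * int M + 1) * fst q i, (m+1) * snd q) (box M m)" for q :: "('k \<Rightarrow> int) \<times> nat"
  have I: "finite I" "I \<noteq> {}" using zero_in_cube by (auto simp: I_def finite_cube J_def)
  have "box N n \<subseteq> (\<Union>q\<in>I. F q)"
    unfolding I_def F_def R_def J_def by (rule box_subset_UN_shifted_boxes)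
  moreover have F: "finite (F q) \<and> F q \<noteq> {} \<and> window_cov (F q) \<epsilon> \<le> window_cov (box M m) \<epsilon>" for q
    unfolding F_def using assms by (simp add: finite_box box_nonempty window_cov_shift_le)
  ultimately have "window_cov (box N n) \<epsilon> \<le> window_cov (\<Union>q\<in>I. F q) \<epsilon>"
    using I(1) assms by (intro window_cov_mono) (auto simp: box_nonempty)
  also have "\<dots> \<le> window_cov (box M m) \<epsilon> ^ card I"
    by (rule window_cov_UN_le[OF I assms F])
  finally show ?thesis
    by (simp add: I_def R_def J_def card_cartesian_product card_cube finite_cube)
qed

end

section \<open>Existence of the limits defining the entropies\<close>

lemma tiles_count_le:
  fixes N n M m k :: nat
  shows "(2 * (N div (2*M+1) + 1) + 1) ^ k * (n div (m+1) + 1) * ((m+1) * (2*M+1) ^ k)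
    \<le> (2*N + 3 * (2*M+1)) ^ k * (n + m + 1)"
proof -
  have "(2 * (N div (2*M+1) + 1) + 1) * (2*M+1) \<le> 2*N + 3 * (2*M+1)"
    using times_div_less_eq_dividend[of "2*M+1" N] by (simp add: algebra_simps)
  moreover have "(n div (m+1) + 1) * (m+1) \<le> n + m + 1"
    using div_times_less_eq_dividend[of n "m+1"] by (simp add: algebra_simps)
  ultimately have "((2 * (N div (2*M+1) + 1) + 1) * (2*M+1)) ^ k * ((n div (m+1) + 1) * (m+1))
      \<le> (2*N + 3 * (2*M+1)) ^ k * (n + m + 1)"
    by (intro mult_le_mono power_mono) auto
  moreover have "(2 * (N div (2*M+1) + 1) + 1) ^ k * (n div (m+1) + 1) * ((m+1) * (2*M+1) ^ k)
      = ((2 * (N div (2*M+1) + 1) + 1) * (2*M+1)) ^ k * ((n div (m+1) + 1) * (m+1))"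
    by (simp only: power_mult_distrib ac_simps)
  ultimately show ?thesis by simp
qed

context commuting_action
begin

definition cov_rate :: "real \<Rightarrow> nat \<times> nat \<Rightarrow> real" where
  "cov_rate \<epsilon> = (\<lambda>(n, N). ln (real (window_cov (box N n) \<epsilon>)) / ((real n + 1) * (2 * real N + 1) ^ CARD('k)))"

lemma cov_rate_nonneg: "\<epsilon> > 0 \<Longrightarrow> 0 \<le> cov_rate \<epsilon> p"
  using window_cov_ge_1[OF finite_box box_nonempty] by (simp add: cov_rate_def case_prod_beta)

lemma cov_rate_le_tiling:
  assumes "\<epsilon> > 0"
  shows "cov_rate \<epsilon> (n, N) \<le> cov_rate \<epsilon> (m, M) *
    (((2 * real N + 3 * (2 * real M + 1)) / (2 * real N + 1)) ^ CARD('k) * ((real n + real m + 1) / (real n + 1)))"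
proof -
  define K where "K = (2 * (N div (2*M+1) + 1) + 1) ^ CARD('k) * (n div (m+1) + 1)"
  define q where "q = (real m + 1) * (2 * real M + 1) ^ CARD('k)"
  define D where "D = (real n + 1) * (2 * real N + 1) ^ CARD('k)"
  define g where "g = ln (real (window_cov (box M m) \<epsilon>))"
  have c: "1 \<le> window_cov (box M m) \<epsilon>" "1 \<le> window_cov (box N n) \<epsilon>"
    using window_cov_ge_1[OF finite_box box_nonempty assms] by auto
  have q: "q > 0" and D: "D > 0" and g: "g \<ge> 0"
    using c by (simp_all add: q_def D_def g_def)
  have "window_cov (box N n) \<epsilon> \<le> window_cov (box M m) \<epsilon> ^ K"
    unfolding K_def by (rule window_cov_box_le_power[OF assms])
  then have "ln (real (window_cov (box N n) \<epsilon>)) \<le> ln (real (window_cov (box M m) \<epsilon>) ^ K)"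
    using c by (subst ln_le_cancel_iff) (auto simp flip: of_nat_power)
  also have "\<dots> = real K * g" using c by (simp add: ln_realpow g_def)
  finally have "cov_rate \<epsilon> (n, N) \<le> real K * g / D"
    unfolding cov_rate_def D_def by (simp add: divide_right_mono)
  also have "\<dots> = (real K * q) * (g / (q * D))" using q D by (simp add: field_simps)
  also have "\<dots> \<le> ((2 * real N + 3 * (2 * real M + 1)) ^ CARD('k) * (real n + real m + 1)) * (g / (q * D))"
  proof (intro mult_right_mono)
    have "real (K * ((m+1) * (2*M+1) ^ CARD('k))) \<le> real ((2*N + 3 * (2*M+1)) ^ CARD('k) * (n + m + 1))"
      using tiles_count_le[where N = N and n = n and M = M and m = m and k = "CARD('k)"] unfolding K_def of_nat_le_iff .
    then show "real K * q \<le> (2 * real N + 3 * (2 * real M + 1)) ^ CARD('k) * (real n + real m + 1)"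
      by (simp add: q_def algebra_simps)
  qed (use g q D in auto)
  also have "\<dots> = cov_rate \<epsilon> (m, M) *
      (((2 * real N + 3 * (2 * real M + 1)) / (2 * real N + 1)) ^ CARD('k) * ((real n + real m + 1) / (real n + 1)))"
    unfolding cov_rate_def g_def q_def D_def by (simp add: field_simps)
  finally show ?thesis .
qed

end

text \<open>A Fekete-type argument without subadditivity: only a multiplicative error tending to 1
  is needed.\<close>

lemma tendsto_INF_if_ratio_bounded:
  fixes a :: "'b \<Rightarrow> real"
  assumes bdd: "bdd_below (range a)"
    and bound: "\<And>p q. a q \<le> a p * \<rho> p q" and lim: "\<And>p. (\<rho> p \<longlongrightarrow> 1) F"
  shows "(a \<longlongrightarrow> (INF p. a p)) F"
proof (rule order_tendstoI)
  fix y assume "y < (INF p. a p)"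
  then have "\<forall>p. y < a p" using cINF_lower[OF bdd] by (meson UNIV_I less_le_trans)
  then show "eventually (\<lambda>p. y < a p) F" by (intro always_eventually) blast
next
  fix y assume "(INF p. a p) < y"
  then obtain p where p: "a p < y" using cINF_less_iff[OF UNIV_not_empty bdd] by auto
  have "((\<lambda>q. a p * \<rho> p q) \<longlongrightarrow> a p * 1) F"
    by (intro tendsto_mult tendsto_const lim)
  then have "eventually (\<lambda>q. a p * \<rho> p q < y) F"
    using p by (simp add: order_tendsto_iff)
  then show "eventually (\<lambda>q. a q < y) F"
    by (elim eventually_mono) (meson bound le_less_trans)
qed

lemma tendsto_space_ratio:
  "((\<lambda>N::nat. ((2 * real N + c) / (2 * real N + 1)) ^ k) \<longlongrightarrow> 1) sequentially"
proof -
  have "((\<lambda>N::nat. (2 * real N + c) / (2 * real N + 1)) \<longlongrightarrow> 1) sequentially"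
    by real_asymp
  then show ?thesis using tendsto_power by fastforce
qed

lemma tendsto_time_ratio: "((\<lambda>n::nat. (real n + a + 1) / (real n + 1)) \<longlongrightarrow> 1) sequentially"
  by real_asymp

context commuting_action
begin

lemma cov_rate_tendsto_INF:
  assumes "\<epsilon> > 0"
  shows "(cov_rate \<epsilon> \<longlongrightarrow> (INF p. cov_rate \<epsilon> p)) (sequentially \<times>\<^sub>F sequentially)"
proof (rule tendsto_INF_if_ratio_bounded)
  show "bdd_below (range (cov_rate \<epsilon>))"
    using cov_rate_nonneg[OF assms] by (intro bdd_belowI[of _ 0]) auto
  let ?\<rho> = "\<lambda>(m, M) (n, N). ((2 * real N + 3 * (2 * real M + 1)) / (2 * real N + 1)) ^ CARD('k) *
    ((real n + real m + 1) / (real n + 1))"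
  show "cov_rate \<epsilon> q \<le> cov_rate \<epsilon> p * ?\<rho> p q" for p q
  proof -
    obtain m M n N where "p = (m, M)" "q = (n, N)" by fastforce
    then show ?thesis using cov_rate_le_tiling[OF assms, of n N m M] by (simp only: prod.case)
  qed
  show "(?\<rho> p \<longlongrightarrow> 1) (sequentially \<times>\<^sub>F sequentially)" for p
  proof -
    obtain m M where p: "p = (m, M)" by fastforce
    have "((\<lambda>q. ((2 * real (snd q) + 3 * (2 * real M + 1)) / (2 * real (snd q) + 1)) ^ CARD('k) *
        ((real (fst q) + real m + 1) / (real (fst q) + 1))) \<longlongrightarrow> 1 * 1) (sequentially \<times>\<^sub>F sequentially)"
      by (intro tendsto_mult filterlim_compose[OF tendsto_space_ratio filterlim_snd]
          filterlim_compose[OF tendsto_time_ratio filterlim_fst])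
    then show ?thesis unfolding p by (simp add: case_prod_beta')
  qed
qed

lemma cov_rate_cube_tendsto_INF:
  assumes "\<epsilon> > 0"
  shows "((\<lambda>N. cov_rate \<epsilon> (0, N)) \<longlongrightarrow> (INF N. cov_rate \<epsilon> (0, N))) sequentially"
proof (rule tendsto_INF_if_ratio_bounded)
  show "bdd_below (range (\<lambda>N. cov_rate \<epsilon> (0, N)))"
    using cov_rate_nonneg[OF assms] by (intro bdd_belowI[of _ 0]) auto
  show "cov_rate \<epsilon> (0, N) \<le> cov_rate \<epsilon> (0, M) * ((2 * real N + 3 * (2 * real M + 1)) / (2 * real N + 1)) ^ CARD('k)"
    for M N
    using cov_rate_le_tiling[OF assms, of 0 N 0 M] by simp
qed (rule tendsto_space_ratio)

lemma S_joint_eq_INF: "\<epsilon> > 0 \<Longrightarrow> S_joint X T f \<epsilon> = (INF p. cov_rate \<epsilon> p)"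
  unfolding S_joint_def dyn_dist_eq_window_dist cov_rate_def[symmetric]
  by (rule tendsto_Lim[OF _ cov_rate_tendsto_INF]) (simp_all add: prod_filter_eq_bot)

lemma S_act_eq_INF: "\<epsilon> > 0 \<Longrightarrow> S_act X T \<epsilon> = (INF N. cov_rate \<epsilon> (0, N))"
  unfolding S_act_def orbit_dist_eq_window_dist[where f = f]
  using limI[OF cov_rate_cube_tendsto_INF] by (simp add: cov_rate_def)

lemma cov_rate_cube_tendsto_S_act: "\<epsilon> > 0 \<Longrightarrow> ((\<lambda>N. cov_rate \<epsilon> (0, N)) \<longlongrightarrow> S_act X T \<epsilon>) sequentially"
  using cov_rate_cube_tendsto_INF S_act_eq_INF by simp

lemma S_joint_le_cov_rate: "\<epsilon> > 0 \<Longrightarrow> S_joint X T f \<epsilon> \<le> cov_rate \<epsilon> p"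
  using cov_rate_nonneg by (auto simp: S_joint_eq_INF intro!: cINF_lower bdd_belowI2)

lemma S_act_nonneg: "\<epsilon> > 0 \<Longrightarrow> 0 \<le> S_act X T \<epsilon>"
  by (simp add: S_act_eq_INF cov_rate_nonneg cINF_greatest)

lemma cov_rate_antimono:
  assumes "0 < \<epsilon>1" "\<epsilon>1 \<le> \<epsilon>2"
  shows "cov_rate \<epsilon>2 p \<le> cov_rate \<epsilon>1 p"
proof -
  obtain n N where p: "p = (n, N)" by fastforce
  have "window_cov (box N n) \<epsilon>2 \<le> window_cov (box N n) \<epsilon>1"
    by (rule window_cov_antimono[OF finite_box box_nonempty assms])
  moreover have "1 \<le> window_cov (box N n) \<epsilon>2"
    using assms by (intro window_cov_ge_1[OF finite_box box_nonempty]) auto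
  ultimately have "ln (real (window_cov (box N n) \<epsilon>2)) \<le> ln (real (window_cov (box N n) \<epsilon>1))"
    by simp
  then show ?thesis unfolding p cov_rate_def by (simp add: divide_right_mono)
qed

lemma S_act_antimono:
  assumes "0 < \<epsilon>1" "\<epsilon>1 \<le> \<epsilon>2"
  shows "S_act X T \<epsilon>2 \<le> S_act X T \<epsilon>1"
proof -
  have "0 < \<epsilon>2" using assms by simp
  have "(INF N. cov_rate \<epsilon>2 (0, N)) \<le> cov_rate \<epsilon>1 (0, N)" for N
    using cov_rate_nonneg[OF \<open>0 < \<epsilon>2\<close>] cov_rate_antimono[OF assms]
    by (meson bdd_belowI2 cINF_lower order_trans UNIV_I)
  then show ?thesis using assms \<open>0 < \<epsilon>2\<close> by (simp add: S_act_eq_INF cINF_greatest)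
qed

lemma S_joint_antimono:
  assumes "0 < \<epsilon>1" "\<epsilon>1 \<le> \<epsilon>2"
  shows "S_joint X T f \<epsilon>2 \<le> S_joint X T f \<epsilon>1"
proof -
  have "S_joint X T f \<epsilon>2 \<le> cov_rate \<epsilon>1 p" for p
    using S_joint_le_cov_rate[of \<epsilon>2 p] cov_rate_antimono[OF assms, of p] assms by simp
  then show ?thesis using assms(1) by (simp add: S_joint_eq_INF cINF_greatest)
qed

end

section \<open>Bounding the joint rate by the rate of the action\<close>

definition lipschitz_at_scale :: "'a::metric_space set \<Rightarrow> ('a \<Rightarrow> 'a) \<Rightarrow> real \<Rightarrow> real \<Rightarrow> bool" where
  "lipschitz_at_scale X f r L \<longleftrightarrow> (\<forall>a\<in>X. \<forall>b\<in>X. dist a b < r \<longrightarrow> dist (f a) (f b) \<le> L * dist a b)"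

context commuting_action
begin

lemma dist_iterate_le:
  assumes x: "x \<in> X" and y: "y \<in> X"
    and lip: "lipschitz_at_scale X f r L" and L: "1 \<le> L" and \<delta>: "0 \<le> \<delta>" "\<delta> * L ^ n < r"
    and start: "dist (T u x) (T u y) \<le> \<delta>"
  shows "j \<le> n \<Longrightarrow> dist (T u ((f ^^ j) x)) (T u ((f ^^ j) y)) \<le> \<delta> * L ^ j"
proof (induction j)
  case (Suc j)
  let ?x = "T u ((f ^^ j) x)" and ?y = "T u ((f ^^ j) y)"
  have IH: "dist ?x ?y \<le> \<delta> * L ^ j" using Suc by simp
  have "\<delta> * L ^ j \<le> \<delta> * L ^ n" using Suc.prems L \<delta> by (intro mult_left_mono power_increasing) auto
  then have "dist ?x ?y < r" using IH \<delta> by linarith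
  moreover have "T u ((f ^^ Suc j) x) = f ?x" "T u ((f ^^ Suc j) y) = f ?y"
    using commute iterate_in x y by simp_all
  ultimately have "dist (T u ((f ^^ Suc j) x)) (T u ((f ^^ Suc j) y)) \<le> L * dist ?x ?y"
    using lip orbit_map_in x y unfolding lipschitz_at_scale_def by simp
  also have "\<dots> \<le> L * (\<delta> * L ^ j)" using IH L by (intro mult_left_mono) auto
  finally show ?case by (simp add: algebra_simps)
qed (use start in simp)

lemma window_cov_box_le_cube:
  assumes lip: "lipschitz_at_scale X f r L" and L: "1 \<le> L" and \<epsilon>: "0 < \<epsilon>" "\<epsilon> \<le> r"
  shows "window_cov (box N n) \<epsilon> \<le> window_cov (box N 0) (\<epsilon> / L ^ n)"
proof (rule cov_num_mono[OF small_covers_window_nonempty[OF finite_box box_nonempty]])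
  have Ln: "L ^ n > 0" using L by simp
  show "0 < \<epsilon> / L ^ n" using \<epsilon> Ln by simp
  fix \<delta> assume "\<delta> < \<epsilon> / L ^ n"
  define \<delta>0 where "\<delta>0 = max \<delta> 0"
  have \<delta>0: "0 \<le> \<delta>0" "\<delta>0 * L ^ n < \<epsilon>"
    using \<open>\<delta> < \<epsilon> / L ^ n\<close> \<epsilon> Ln by (auto simp: \<delta>0_def pos_less_divide_eq)
  show "\<exists>\<delta>'<\<epsilon>. \<forall>x\<in>X. \<forall>y\<in>X. window_dist T f (box N 0) x y \<le> \<delta> \<longrightarrow> window_dist T f (box N n) x y \<le> \<delta>'"
  proof (intro exI[of _ "\<delta>0 * L ^ n"] conjI ballI impI \<delta>0(2))
    fix x y assume x: "x \<in> X" and y: "y \<in> X" and close: "window_dist T f (box N 0) x y \<le> \<delta>"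
    show "window_dist T f (box N n) x y \<le> \<delta>0 * L ^ n"
    proof (rule window_dist_le[OF finite_box box_nonempty])
      fix u :: "'k \<Rightarrow> int" and j assume "(u, j) \<in> box N n"
      then have u: "(u, 0) \<in> box N 0" and j: "j \<le> n" by (auto simp: box_def)
      have "dist (T u x) (T u y) \<le> \<delta>0"
        using window_dist_ge[OF finite_box box_nonempty u, of x y] close by (simp add: \<delta>0_def)
      then have "dist (T u ((f ^^ j) x)) (T u ((f ^^ j) y)) \<le> \<delta>0 * L ^ j"
        using \<delta>0 \<epsilon> by (intro dist_iterate_le[OF x y lip L \<delta>0(1) _ _ j]) auto
      also have "\<dots> \<le> \<delta>0 * L ^ n" using j L \<delta>0 by (intro mult_left_mono power_increasing) auto
      finally show "dist (T u ((f ^^ j) x)) (T u ((f ^^ j) y)) \<le> \<delta>0 * L ^ n" .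
    qed
  qed
qed

lemma S_joint_le_S_act:
  assumes lip: "lipschitz_at_scale X f r L" and L: "1 \<le> L" and \<epsilon>: "0 < \<epsilon>" "\<epsilon> \<le> r"
  shows "S_joint X T f \<epsilon> \<le> S_act X T (\<epsilon> / L ^ n) / (real n + 1)"
proof (rule LIMSEQ_le_const)
  have "0 < \<epsilon> / L ^ n" using \<epsilon> L by simp
  then show "(\<lambda>N. cov_rate (\<epsilon> / L ^ n) (0, N) / (real n + 1)) \<longlonglongrightarrow> S_act X T (\<epsilon> / L ^ n) / (real n + 1)"
    by (intro tendsto_divide cov_rate_cube_tendsto_S_act tendsto_const) auto
  show "\<exists>N0. \<forall>N\<ge>N0. S_joint X T f \<epsilon> \<le> cov_rate (\<epsilon> / L ^ n) (0, N) / (real n + 1)"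
  proof (intro exI allI impI)
    fix N
    have "window_cov (box N n) \<epsilon> \<le> window_cov (box N 0) (\<epsilon> / L ^ n)"
      by (rule window_cov_box_le_cube[OF lip L \<epsilon>])
    moreover have "1 \<le> window_cov (box N n) \<epsilon>" using \<epsilon> by (intro window_cov_ge_1[OF finite_box box_nonempty]) auto
    ultimately have "ln (real (window_cov (box N n) \<epsilon>)) \<le> ln (real (window_cov (box N 0) (\<epsilon> / L ^ n)))"
      by simp
    then have "cov_rate \<epsilon> (n, N) \<le> cov_rate (\<epsilon> / L ^ n) (0, N) / (real n + 1)"
      unfolding cov_rate_def by (simp add: divide_right_mono field_simps)
    then show "S_joint X T f \<epsilon> \<le> cov_rate (\<epsilon> / L ^ n) (0, N) / (real n + 1)"
      using S_joint_le_cov_rate[OF \<epsilon>(1)] order_trans by blast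
  qed
qed

end

lemma exists_iterate_count:
  fixes L \<epsilon> \<delta> :: real
  assumes L: "1 < L" and \<delta>: "0 < \<delta>" "\<delta> * L ^ K < \<epsilon>"
  obtains n where "K \<le> n" "\<delta> \<le> \<epsilon> / L ^ n" "ln (\<epsilon> / \<delta>) < (real n + 1) * ln L"
proof -
  have c: "ln L > 0" using L by simp
  have "0 < \<delta> * L ^ K" using \<delta> L by simp
  then have \<epsilon>: "0 < \<epsilon>" using \<delta> by linarith
  have "L ^ K < \<epsilon> / \<delta>" using \<delta> by (simp add: field_simps)
  moreover have "0 < L ^ K" using L by simp
  ultimately have "ln (L ^ K) < ln (\<epsilon> / \<delta>)" by (subst ln_less_cancel_iff) auto
  then have "real K * ln L < ln (\<epsilon> / \<delta>)" using L by (simp add: ln_realpow)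
  then have qK: "real K < ln (\<epsilon> / \<delta>) / ln L" using c by (simp add: pos_less_divide_eq)
  define n where "n = nat \<lfloor>ln (\<epsilon> / \<delta>) / ln L\<rfloor>"
  have nq: "real n \<le> ln (\<epsilon> / \<delta>) / ln L" "ln (\<epsilon> / \<delta>) / ln L < real n + 1"
    using qK unfolding n_def by linarith+
  show thesis
  proof
    show "K \<le> n" using qK nq by linarith
    have "ln (L ^ n) \<le> ln (\<epsilon> / \<delta>)" using nq(1) c L by (simp add: ln_realpow pos_le_divide_eq)
    then have "L ^ n \<le> \<epsilon> / \<delta>" using L \<delta> \<epsilon> by (subst (asm) ln_le_cancel_iff) auto
    then show "\<delta> \<le> \<epsilon> / L ^ n" using \<delta> L by (simp add: field_simps)
    show "ln (\<epsilon> / \<delta>) < (real n + 1) * ln L" using nq(2) c by (simp add: divide_less_eq)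
  qed
qed

context commuting_action
begin

lemma lower_mdim_nonneg: "0 \<le> lower_mdim X T"
  unfolding lower_mdim_def
proof (rule Liminf_bounded)
  show "eventually (\<lambda>\<epsilon>. 0 \<le> ereal (S_act X T \<epsilon> / ln (1 / \<epsilon>))) (at_right 0)"
    unfolding eventually_at_right_field using S_act_nonneg by (intro exI[of _ 1]) auto
qed

lemma frequently_below_lower_mdim:
  assumes "lower_mdim X T < ereal m"
  shows "\<exists>\<^sub>F \<epsilon> in at_right 0. S_act X T \<epsilon> / ln (1 / \<epsilon>) < m"
proof (rule ccontr)
  assume "\<not> ?thesis"
  then have "eventually (\<lambda>\<epsilon>. ereal m \<le> ereal (S_act X T \<epsilon> / ln (1 / \<epsilon>))) (at_right 0)"
    unfolding not_frequently by (simp add: not_less)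
  then have "ereal m \<le> lower_mdim X T" unfolding lower_mdim_def by (rule Liminf_bounded)
  then show False using assms by simp
qed

text \<open>Pick a scale \<delta> < \<epsilon>/L^K at which the action has rate below m ln(1/\<delta>) and
  iterate f about ln(\<epsilon>/\<delta>)/ln L times: the rate per time step is then at most
  m ln L + m ln(1/\<epsilon>)/K.\<close>

lemma S_joint_le:
  assumes lip: "lipschitz_at_scale X f r L" and L: "1 < L"
    and \<epsilon>: "0 < \<epsilon>" "\<epsilon> \<le> r" "\<epsilon> < 1" and mdim: "lower_mdim X T < ereal m"
  shows "S_joint X T f \<epsilon> \<le> m * ln L"
proof (rule field_le_epsilon)
  fix \<eta> :: real assume \<eta>: "0 < \<eta>"
  have ln\<epsilon>: "0 < ln (1 / \<epsilon>)" using \<epsilon> by simp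
  obtain K :: nat where K: "max 1 (m * ln (1 / \<epsilon>) / \<eta>) < real K" using reals_Archimedean2 by blast
  have LK: "1 \<le> L ^ K" using L by simp
  have "eventually (\<lambda>\<delta>. 0 < \<delta> \<and> \<delta> < \<epsilon> / L ^ K) (at_right 0)"
    unfolding eventually_at_right_field using \<epsilon> LK by (intro exI[of _ "\<epsilon> / L ^ K"]) auto
  from frequently_ex[OF frequently_eventually_frequently[OF frequently_below_lower_mdim[OF mdim] this]]
  obtain \<delta> where \<delta>: "S_act X T \<delta> / ln (1 / \<delta>) < m" "0 < \<delta>" "\<delta> < \<epsilon> / L ^ K" by blast
  have "\<delta> < 1" using \<delta>(3) \<epsilon> LK by (smt (verit) divide_le_eq_1_pos le_divide_eq_1 less_le_trans)
  then have ln\<delta>: "0 < ln (1 / \<delta>)" using \<delta>(2) by simp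
  have S\<delta>: "S_act X T \<delta> < m * ln (1 / \<delta>)" using \<delta>(1) ln\<delta> by (simp add: divide_less_eq)
  then have m: "0 < m" using S_act_nonneg[OF \<delta>(2)] ln\<delta> by (smt (verit) mult_nonpos_nonneg)
  obtain n where n: "K \<le> n" "\<delta> \<le> \<epsilon> / L ^ n" "ln (\<epsilon> / \<delta>) < (real n + 1) * ln L"
    using exists_iterate_count[OF L \<delta>(2)] \<delta>(3) L by (auto simp: field_simps)
  have "S_joint X T f \<epsilon> \<le> S_act X T (\<epsilon> / L ^ n) / (real n + 1)"
    using S_joint_le_S_act[OF lip _ \<epsilon>(1,2)] L by simp
  also have "\<dots> \<le> S_act X T \<delta> / (real n + 1)"
    using S_act_antimono[OF \<delta>(2) n(2)] by (simp add: divide_right_mono)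
  also have "\<dots> \<le> m * (ln (\<epsilon> / \<delta>) + ln (1 / \<epsilon>)) / (real n + 1)"
    using S\<delta> \<delta>(2) \<epsilon>(1) by (intro divide_right_mono) (simp_all add: ln_div)
  also have "\<dots> \<le> m * ((real n + 1) * ln L + ln (1 / \<epsilon>)) / (real n + 1)"
    using n(3) m by (intro divide_right_mono mult_left_mono) auto
  also have "\<dots> = m * ln L + m * ln (1 / \<epsilon>) / (real n + 1)"
    by (simp add: field_simps)
  also have "\<dots> \<le> m * ln L + m * ln (1 / \<epsilon>) / real K"
    using n(1) K m ln\<epsilon> by (intro add_left_mono divide_left_mono) auto
  also have "\<dots> < m * ln L + \<eta>"
    using K \<eta> by (simp add: divide_less_eq mult.commute)
  finally show "S_joint X T f \<epsilon> \<le> m * ln L + \<eta>" by simp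
qed

end

section \<open>The limits in the scale\<close>

lemma tendsto_SUP_at_right_0_if_antimono:
  fixes \<phi> :: "real \<Rightarrow> ereal"
  assumes antimono: "\<And>a b. 0 < a \<Longrightarrow> a \<le> b \<Longrightarrow> \<phi> b \<le> \<phi> a"
  shows "(\<phi> \<longlongrightarrow> (SUP e\<in>{0<..}. \<phi> e)) (at_right 0)"
proof (rule order_tendstoI)
  fix y assume "y < (SUP e\<in>{0<..}. \<phi> e)"
  then obtain e where "e > 0" "y < \<phi> e" by (auto simp: less_SUP_iff)
  then show "eventually (\<lambda>x. y < \<phi> x) (at_right 0)"
    unfolding eventually_at_right_field using antimono by (intro exI[of _ e]) (auto intro: less_le_trans)
next
  fix y assume y: "(SUP e\<in>{0<..}. \<phi> e) < y"
  show "eventually (\<lambda>x. \<phi> x < y) (at_right 0)"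
    unfolding eventually_at_right_field
  proof (intro exI[of _ 1] conjI allI impI)
    fix x :: real assume "0 < x"
    then have "\<phi> x \<le> (SUP e\<in>{0<..}. \<phi> e)" by (intro SUP_upper) auto
    then show "\<phi> x < y" using y by (rule le_less_trans)
  qed simp
qed

lemma tendsto_INF_at_right_0_if_mono:
  fixes \<phi> :: "real \<Rightarrow> ereal"
  assumes mono: "\<And>a b. 0 < a \<Longrightarrow> a \<le> b \<Longrightarrow> \<phi> a \<le> \<phi> b"
  shows "(\<phi> \<longlongrightarrow> (INF e\<in>{0<..}. \<phi> e)) (at_right 0)"
proof (rule order_tendstoI)
  fix y assume "(INF e\<in>{0<..}. \<phi> e) < y"
  then obtain e where e: "e > 0" "\<phi> e < y" by (auto simp: INF_less_iff)
  show "eventually (\<lambda>x. \<phi> x < y) (at_right 0)"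
    unfolding eventually_at_right_field
  proof (intro exI[of _ e] conjI allI impI)
    fix x :: real assume "0 < x" "x < e"
    then have "\<phi> x \<le> \<phi> e" using mono by simp
    then show "\<phi> x < y" using e(2) by (rule le_less_trans)
  qed (use e in simp)
next
  fix y assume "y < (INF e\<in>{0<..}. \<phi> e)"
  then show "eventually (\<lambda>x. y < \<phi> x) (at_right 0)"
    unfolding eventually_at_right_field by (intro exI[of _ 1]) (auto intro: less_le_trans INF_lower)
qed

context commuting_action
begin

lemma htop_eq_SUP: "htop X T f = (SUP \<epsilon>\<in>{0<..}. ereal (S_joint X T f \<epsilon>))"
  unfolding htop_def
  by (rule tendsto_Lim[OF trivial_limit_at_right_real tendsto_SUP_at_right_0_if_antimono])
    (simp add: S_joint_antimono)

lemma htop_le: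
  assumes lip: "lipschitz_at_scale X f r L" and r: "0 < r" and L: "1 < L"
    and mdim: "lower_mdim X T < ereal m"
  shows "htop X T f \<le> ereal (m * ln L)"
  unfolding htop_eq_SUP
proof (rule SUP_least)
  fix \<epsilon> :: real assume "\<epsilon> \<in> {0<..}"
  define \<epsilon>' where "\<epsilon>' = min \<epsilon> (min r (1/2))"
  have \<epsilon>': "0 < \<epsilon>'" "\<epsilon>' \<le> \<epsilon>" "\<epsilon>' \<le> r" "\<epsilon>' < 1" using \<open>\<epsilon> \<in> {0<..}\<close> r by (auto simp: \<epsilon>'_def)
  have "S_joint X T f \<epsilon> \<le> S_joint X T f \<epsilon>'" by (rule S_joint_antimono[OF \<epsilon>'(1,2)])
  also have "\<dots> \<le> m * ln L" by (rule S_joint_le[OF lip L \<epsilon>'(1,3,4) mdim])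
  finally show "ereal (S_joint X T f \<epsilon>) \<le> ereal (m * ln L)" by simp
qed

end

lemma local_lip_eq_INF:
  "local_lip X f = (INF \<epsilon>\<in>{0<..}. SUP p \<in> {(x, y). x \<in> X \<and> y \<in> X \<and> 0 < dist x y \<and> dist x y < \<epsilon>}.
     ereal (dist (f (fst p)) (f (snd p)) / dist (fst p) (snd p)))"
  unfolding local_lip_def
  by (rule tendsto_Lim[OF trivial_limit_at_right_real tendsto_INF_at_right_0_if_mono])
    (auto intro!: SUP_subset_mono)

lemma local_lip_le:
  assumes "\<forall>x\<in>X. \<forall>y\<in>X. dist (f x) (f y) \<le> C * dist x y"
  shows "local_lip X f \<le> ereal C"
proof -
  have "local_lip X f \<le> (SUP p \<in> {(x, y). x \<in> X \<and> y \<in> X \<and> 0 < dist x y \<and> dist x y < 1}.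
      ereal (dist (f (fst p)) (f (snd p)) / dist (fst p) (snd p)))"
    unfolding local_lip_eq_INF by (rule INF_lower) simp
  also have "\<dots> \<le> ereal C"
    using assms by (intro SUP_least) (auto simp: divide_le_eq)
  finally show ?thesis .
qed

lemma lipschitz_at_scale_if_local_lip_less:
  assumes "local_lip X f < ereal L"
  obtains r where "0 < r" "lipschitz_at_scale X f r L"
proof -
  obtain r where r: "0 < r" and less: "(SUP p \<in> {(x, y). x \<in> X \<and> y \<in> X \<and> 0 < dist x y \<and> dist x y < r}.
      ereal (dist (f (fst p)) (f (snd p)) / dist (fst p) (snd p))) < ereal L"
    using assms unfolding local_lip_eq_INF by (auto simp: INF_less_iff)
  have "dist (f a) (f b) \<le> L * dist a b" if "a \<in> X" "b \<in> X" "0 < dist a b" "dist a b < r" for a b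
  proof -
    have "(a, b) \<in> {(x, y). x \<in> X \<and> y \<in> X \<and> 0 < dist x y \<and> dist x y < r}"
      using that by simp
    then have "ereal (dist (f a) (f b) / dist a b) < ereal L"
      using le_less_trans[OF SUP_upper less] by fastforce
    then show ?thesis using that(3) by (simp add: divide_less_eq less_imp_le)
  qed
  then have "lipschitz_at_scale X f r L"
    unfolding lipschitz_at_scale_def by (metis dist_le_zero_iff dist_self mult_zero_right not_less order_refl)
  with r show thesis by (rule that)
qed

lemma log_plus_eq_ln_max:
  "L \<noteq> \<infinity> \<Longrightarrow> log_plus L = ereal (ln (max 1 (real_of_ereal L)))"
  by (cases L) (auto simp: log_plus_def max_def)

lemma ereal_le_max_1_real_of_ereal: "L \<noteq> \<infinity> \<Longrightarrow> L \<le> ereal (max 1 (real_of_ereal L))"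
  by (cases L) auto

lemma le_mult_ln_if_perturbed:
  assumes l: "1 \<le> l" and bound: "\<And>t. 0 < t \<Longrightarrow> h \<le> ereal ((m + t) * ln (l + t))"
  shows "h \<le> ereal (m * ln l)"
proof -
  have "((\<lambda>t. ereal ((m + t) * ln (l + t))) \<longlongrightarrow> ereal ((m + 0) * ln (l + 0))) (at_right 0)"
    using l by (intro tendsto_ereal tendsto_mult tendsto_add tendsto_ln tendsto_const tendsto_ident_at) auto
  moreover have "eventually (\<lambda>t. h \<le> ereal ((m + t) * ln (l + t))) (at_right 0)"
    unfolding eventually_at_right_field using bound by (intro exI[of _ 1]) auto
  ultimately show ?thesis using tendsto_le[OF trivial_limit_at_right_real _ tendsto_const] by fastforce
qed

lemma htop_empty: "htop {} T f = 0"
proof -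
  have "S_joint {} T f \<epsilon> = 0" for \<epsilon>
    unfolding S_joint_def cov_num_empty
    by (simp add: case_prod_unfold tendsto_Lim[OF _ tendsto_const] prod_filter_eq_bot)
  then show ?thesis unfolding htop_def by (simp add: tendsto_Lim[OF _ tendsto_const] zero_ereal_def)
qed

lemma lower_mdim_empty: "lower_mdim {} T = 0"
  unfolding lower_mdim_def S_act_def cov_num_empty by (simp add: limI Liminf_const zero_ereal_def)

theorem proposition4p5:
  fixes X :: "'a::metric_space set"
    and T :: "('k::finite \<Rightarrow> int) \<Rightarrow> 'a \<Rightarrow> 'a"
    and f :: "'a \<Rightarrow> 'a"
  assumes "compact X"
    and "is_Zk_action X T"
    and "lower_mdim X T < \<infinity>"
    and "f ` X \<subseteq> X"
    and "continuous_on X f"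
    and "\<forall>u. \<forall>x\<in>X. f (T u x) = T u (f x)"
    and "\<exists>C. \<forall>x\<in>X. \<forall>y\<in>X. dist (f x) (f y) \<le> C * dist x y"
  shows "htop X T f \<le> log_plus (local_lip X f) * lower_mdim X T"
proof (cases "X = {}")
  case True
  then show ?thesis by (simp add: htop_empty lower_mdim_empty)
next
  case False
  interpret commuting_action X T f using assms False by unfold_locales auto
  obtain C where "\<forall>x\<in>X. \<forall>y\<in>X. dist (f x) (f y) \<le> C * dist x y" using assms(7) by blast
  then have L_finite: "local_lip X f \<noteq> \<infinity>" using local_lip_le[of X f C] by auto
  define l where "l = max 1 (real_of_ereal (local_lip X f))"
  have l: "1 \<le> l" by (simp add: l_def)
  obtain m where m: "lower_mdim X T = ereal m"
    using lower_mdim_nonneg assms(3) by (cases "lower_mdim X T") auto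
  have "htop X T f \<le> ereal ((m + t) * ln (l + t))" if t: "0 < t" for t
  proof -
    have "local_lip X f \<le> ereal l"
      unfolding l_def by (rule ereal_le_max_1_real_of_ereal[OF L_finite])
    also have "\<dots> < ereal (l + t)" using t by simp
    finally obtain r where "0 < r" "lipschitz_at_scale X f r (l + t)"
      by (rule lipschitz_at_scale_if_local_lip_less)
    moreover have "1 < l + t" "lower_mdim X T < ereal (m + t)" using l m t by simp_all
    ultimately show ?thesis by (intro htop_le)
  qed
  then have "htop X T f \<le> ereal (m * ln l)" by (rule le_mult_ln_if_perturbed[OF l])
  then show ?thesis unfolding log_plus_eq_ln_max[OF L_finite] m l_def[symmetric] by (simp add: mult.commute)
qed

end
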